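(* Let $F(s)$ be an entire function of genus zero or one. Suppose that (i) $F(s)$ is real on the real axis; (ii) there exists a real number $\sigma_0<1/2$ such that all zeros of $F(s)$ lie in the vertical strip $\sigma_0<\mathrm{Re}(s)<1/2$ except for finitely many zeros; (iii) $F(s)$ has only finitely many zeros in the half-plane $\mathrm{Re}(s)\geq 1/2$; (iv) there exists $C>0$ such that $N(T)\leq C\,T\log T$ as $T\to\infty$, where $N(T)$ is the number of zeros $\rho$ of $F$ with $0\leq \mathrm{Im}(\rho)<T$; (v) $F(1-\sigma)/F(\sigma)>0$ for all sufficiently large real $\sigma>0$, and $F(1-\sigma)/F(\sigma)\to 0$ as $\sigma\to\infty$. Then there exist a constant $C$, an integer $m\geq 0$ and a real number $B'\geq 0$ such that \[ F(s)= C s^m e^{B' s}\prod_{0 \neq \rho \in \mathbb R}\Bigl(1-\frac{s}{\rho}\Bigr)\prod_{\mathrm{Im}(\rho)>0}\left[ \Bigl(1-\frac{s}{\rho}\Bigr)\Bigl(1-\frac{s}{\bar{\rho}}\Bigr) \right], \] where $\rho$ runs over the zeros of $F$ counted with multiplicity, and the product on the right converges absolutely on every compact set when taken with the brackets.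
   Context: An entire function of genus at most one admits a Hadamard factorization $e^{a+bs}s^m\prod_\rho(1-s/\rho)e^{s/\rho}$ with $\sum_\rho|\rho|^{-2}<\infty$. *)

theory Defs
  imports "HOL-Complex_Analysis.Complex_Analysis"
begin

definition zero_mult :: "(complex \<Rightarrow> complex) \<Rightarrow> complex \<Rightarrow> nat" where
  "zero_mult F z = (if F z = 0 then nat (zorder F z) else 0)"

text \<open>Zeros of F counted with multiplicity: a zero z of multiplicity m
  is represented by the m index pairs (z,0), ..., (z,m-1).\<close>
definition zeros_mult :: "(complex \<Rightarrow> complex) \<Rightarrow> (complex \<times> nat) set" where
  "zeros_mult F = {(z, k). F z = 0 \<and> k < zero_mult F z}"

definition genus_le_one :: "(complex \<Rightarrow> complex) \<Rightarrow> bool" where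
  "genus_le_one F \<longleftrightarrow> F holomorphic_on UNIV \<and>
     (\<exists>a b :: complex. \<exists>m :: nat.
        (\<lambda>p. 1 / norm (fst p) ^ 2) summable_on {p \<in> zeros_mult F. fst p \<noteq> 0} \<and>
        (\<forall>s. ((\<lambda>X. exp (a + b * s) * s ^ m *
                   (\<Prod>p\<in>X. (1 - s / fst p) * exp (s / fst p)))
               \<longlongrightarrow> F s) (finite_subsets_at_top {p \<in> zeros_mult F. fst p \<noteq> 0})))"

definition zero_count :: "(complex \<Rightarrow> complex) \<Rightarrow> real \<Rightarrow> nat" where
  "zero_count F T = card {p \<in> zeros_mult F. 0 \<le> Im (fst p) \<and> Im (fst p) < T}"

definition brfactor :: "complex \<Rightarrow> complex \<Rightarrow> complex" where
  "brfactor \<rho> s = (if \<rho> \<in> \<real> then 1 - s / \<rho> else (1 - s / \<rho>) * (1 - s / cnj \<rho>))"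

definition prod_index :: "(complex \<Rightarrow> complex) \<Rightarrow> (complex \<times> nat) set" where
  "prod_index F = {p \<in> zeros_mult F. (fst p \<in> \<real> \<and> fst p \<noteq> 0) \<or> Im (fst p) > 0}"

end

(*
  Since F is real on the real axis, its zeros, counted with multiplicity, are symmetric under
  conjugation. Pairing each nonreal zero with its conjugate in the Hadamard product turns the
  primary factors into the bracketed factors times exp (s/rho + s/conj rho); since the real parts
  of all zeros are bounded, these exponents are absolutely summable and merge into the linear
  term, so F(s) = C s^m exp(B s) P(s), with B real because F and P are real on the real axis.
  For a zero rho left of the critical line, |sigma - rho| exceeds |1 - sigma - rho| by a factor
  1 + u whose sum over the zeros is o(sigma), so |P(sigma)| <= exp(o(sigma)) |P(1 - sigma)|;
  if B were negative, |F(1 - sigma)/F(sigma)| would then be bounded below, against (v).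
*)
theory Submission
  imports Defs "HOL-Real_Asymp.Real_Asymp"
begin

section \<open>Zeros counted with multiplicity\<close>

lemma entire_real_on_Reals_cnj:
  fixes F :: "complex \<Rightarrow> complex"
  assumes hol: "F holomorphic_on UNIV" and real: "\<forall>x::real. F (of_real x) \<in> \<real>"
  shows "F (cnj z) = cnj (F z)"
proof -
  define H where "H = (\<lambda>z. F z - (cnj \<circ> F \<circ> cnj) z)"
  have "(cnj \<circ> F \<circ> cnj) holomorphic_on UNIV"
    by (rule holomorphic_on_compose_cnj_cnj) (use hol in auto)
  hence "H holomorphic_on UNIV" unfolding H_def using hol by (intro holomorphic_intros)
  moreover have lim: "0 islimpt (\<real>::complex set)"
  proof (rule islimpt_approachable[THEN iffD2], intro allI impI)
    fix e :: real assume "e > 0"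
    thus "\<exists>x'\<in>\<real>. x' \<noteq> 0 \<and> dist x' (0::complex) < e"
      by (intro bexI[of _ "of_real (e/2)"]) (auto simp: dist_norm)
  qed
  moreover have "H x = 0" if "x \<in> \<real>" for x
  proof -
    from that obtain r where r: "x = of_real r" by (auto elim: Reals_cases)
    have "F x \<in> \<real>" using real r by auto
    thus ?thesis unfolding H_def using r by (auto simp: Reals_cnj_iff)
  qed
  ultimately have "H (cnj z) = 0"
    using analytic_continuation[OF _ open_UNIV connected_UNIV subset_UNIV _ lim] by blast
  thus ?thesis unfolding H_def by simp
qed

text \<open>The hypothesis \<open>F \<beta> \<noteq> 0\<close> only excludes \<open>F = 0\<close>, for which \<open>zorder\<close> is a junk value.
  The local factorisation \<open>F w = g w (w - \<rho>)\<^sup>n\<close> reflects to one of the same order at \<open>cnj \<rho>\<close>.\<close>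

lemma zorder_cnj_of_reflection:
  fixes F :: "complex \<Rightarrow> complex"
  assumes hol: "F holomorphic_on UNIV" and refl: "\<And>z. F (cnj z) = cnj (F z)"
    and nz: "F \<beta> \<noteq> 0"
  shows "zorder F (cnj \<rho>) = zorder F \<rho>"
proof -
  have iso: "isolated_singularity_at F \<rho>"
    by (rule isolated_singularity_at_holomorphic[of F UNIV]) (use hol in auto)
  have ness: "not_essential F \<rho>"
    by (rule not_essential_holomorphic[OF hol]) auto
  have "\<forall>\<^sub>F w in at \<rho>. F w \<noteq> 0 \<and> w \<in> UNIV"
    by (rule non_zero_neighbour_alt[OF hol open_UNIV connected_UNIV _ _ nz]) auto
  hence "\<exists>\<^sub>F w in at \<rho>. F w \<noteq> 0"
    by (intro eventually_frequently) (auto elim: eventually_mono)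
  then obtain r where r: "r > 0" "zor_poly F \<rho> holomorphic_on cball \<rho> r" "zor_poly F \<rho> \<rho> \<noteq> 0"
    "\<And>w. w \<in> cball \<rho> r - {\<rho>} \<Longrightarrow> F w = zor_poly F \<rho> w * (w - \<rho>) powi zorder F \<rho>"
    using zorder_exist[OF iso ness] by blast
  define g where "g = zor_poly F \<rho>"
  have norm_diff_cnj: "cmod (a - cnj b) = cmod (cnj a - b)" for a b
    by (metis complex_cnj_cnj complex_cnj_diff complex_mod_cnj)
  have hol_g: "(cnj \<circ> g \<circ> cnj) holomorphic_on ball (cnj \<rho>) r"
  proof (rule holomorphic_on_compose_cnj_cnj)
    have "cnj ` ball (cnj \<rho>) r \<subseteq> cball \<rho> r"
      by (auto simp: dist_norm norm_diff_cnj)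
    thus "g holomorphic_on cnj ` ball (cnj \<rho>) r"
      using r(2) holomorphic_on_subset unfolding g_def by blast
  qed auto
  show ?thesis
  proof (rule zorder_eqI[OF open_ball _ hol_g])
    show "cnj \<rho> \<in> ball (cnj \<rho>) r" using r by auto
    show "(cnj \<circ> g \<circ> cnj) (cnj \<rho>) \<noteq> 0" using r(3) by (simp add: g_def)
    fix w assume w: "w \<in> ball (cnj \<rho>) r" "w \<noteq> cnj \<rho>"
    hence "cnj w \<in> cball \<rho> r - {\<rho>}" by (auto simp: dist_norm norm_diff_cnj)
    hence "cnj (F (cnj w)) = cnj (g (cnj w)) * (w - cnj \<rho>) powi zorder F \<rho>"
      using r(4) by (simp add: g_def)
    thus "F w = (cnj \<circ> g \<circ> cnj) w * (w - cnj \<rho>) powi zorder F \<rho>"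
      using refl[of "cnj w"] by simp
  qed
qed

lemma zeros_mult_apfst_cnj:
  fixes F :: "complex \<Rightarrow> complex"
  assumes "F holomorphic_on UNIV" and refl: "\<And>z. F (cnj z) = cnj (F z)" and "F \<beta> \<noteq> 0"
    and "p \<in> zeros_mult F"
  shows "apfst cnj p \<in> zeros_mult F"
proof -
  have "zero_mult F (cnj (fst p)) = zero_mult F (fst p)"
    using zorder_cnj_of_reflection[OF assms(1-3)] refl unfolding zero_mult_def by simp
  thus ?thesis using assms(4) refl by (cases p) (simp add: zeros_mult_def)
qed

lemma finite_zeros_mult:
  assumes "finite {z. F z = 0 \<and> Q z}"
  shows "finite {p \<in> zeros_mult F. Q (fst p)}"
proof (rule finite_subset)
  show "{p \<in> zeros_mult F. Q (fst p)} \<subseteq> Sigma {z. F z = 0 \<and> Q z} (\<lambda>z. {..<zero_mult F z})"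
    by (auto simp: zeros_mult_def)
qed (use assms in auto)

lemma bounded_Re_if_finite_outside_strip:
  assumes "finite {z. P z \<and> \<not> (a < Re z \<and> Re z < b)}"
  obtains K where "\<And>z. P z \<Longrightarrow> \<bar>Re z\<bar> \<le> K"
proof -
  obtain R where R: "\<And>z. P z \<Longrightarrow> \<not> (a < Re z \<and> Re z < b) \<Longrightarrow> norm z \<le> R"
    using finite_imp_bounded[OF assms] unfolding bounded_iff by auto
  have "\<bar>Re z\<bar> \<le> \<bar>R\<bar> + \<bar>a\<bar> + \<bar>b\<bar>" if "P z" for z
    using R[OF that] abs_Re_le_cmod[of z] by (cases "a < Re z \<and> Re z < b") auto
  thus thesis by (rule that)
qed

section \<open>Unordered sums and products\<close>

lemma norm_prod_one_plus_minus_one_le: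
  fixes f :: "'a \<Rightarrow> 'b :: {real_normed_div_algebra, comm_ring_1}"
  shows "norm ((\<Prod>x\<in>A. 1 + f x) - 1) \<le> (\<Prod>x\<in>A. 1 + norm (f x)) - 1"
proof (induction A rule: infinite_finite_induct)
  case (insert x A)
  from insert.hyps have
    "norm ((\<Prod>y\<in>insert x A. 1 + f y) - 1) =
       norm ((\<Prod>y\<in>A. 1 + f y) - 1 + f x * (\<Prod>y\<in>A. 1 + f y))"
    by (simp add: algebra_simps)
  also have "\<dots> \<le> norm ((\<Prod>y\<in>A. 1 + f y) - 1) + norm (f x * (\<Prod>y\<in>A. 1 + f y))"
    by (rule norm_triangle_ineq)
  also have "norm (f x * (\<Prod>y\<in>A. 1 + f y)) = norm (f x) * (\<Prod>y\<in>A. norm (1 + f y))"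
    by (simp add: prod_norm norm_mult)
  also have "(\<Prod>y\<in>A. norm (1 + f y)) \<le> (\<Prod>y\<in>A. 1 + norm (f y))"
    by (intro prod_mono conjI) (auto intro: norm_triangle_le)
  also note insert.IH
  also have "(\<Prod>y\<in>A. 1 + norm (f y)) - 1 + norm (f x) * (\<Prod>y\<in>A. 1 + norm (f y)) =
             (\<Prod>y\<in>insert x A. 1 + norm (f y)) - 1"
    using insert.hyps by (simp add: algebra_simps)
  finally show ?case by (simp add: mult_left_mono)
qed simp_all

lemma norm_prod_diff_le_exp_sum:
  fixes g :: "'a \<Rightarrow> 'b :: {real_normed_div_algebra, comm_ring_1}"
  assumes "finite Y" and "X \<subseteq> Y" and bound: "\<And>p. p \<in> Y \<Longrightarrow> norm (g p - 1) \<le> M p"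
  shows "norm (prod g Y - prod g X) \<le> exp (sum M Y) - exp (sum M X)"
proof -
  have M_nonneg: "M p \<ge> 0" if "p \<in> Y" for p
    using bound[OF that] norm_ge_zero order_trans by blast
  have norm_le: "norm (g p) \<le> 1 + M p" if "p \<in> Y" for p
    using bound[OF that] norm_triangle_ineq[of "g p - 1" 1] by simp
  have "norm (prod g X) = (\<Prod>p\<in>X. norm (g p))" by (simp add: prod_norm)
  also have "\<dots> \<le> (\<Prod>p\<in>X. 1 + M p)"
    using norm_le assms(2) by (intro prod_mono) auto
  also have "\<dots> \<le> exp (sum M X)" using M_nonneg assms(2) by (intro prod_le_exp_sum) auto
  finally have head: "norm (prod g X) \<le> exp (sum M X)" .
  have "norm (prod g (Y - X) - 1) \<le> (\<Prod>p\<in>Y - X. 1 + norm (g p - 1)) - 1"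
    using norm_prod_one_plus_minus_one_le[of "\<lambda>p. g p - 1" "Y - X"] by simp
  also have "(\<Prod>p\<in>Y - X. 1 + norm (g p - 1)) \<le> (\<Prod>p\<in>Y - X. 1 + M p)"
    using bound by (intro prod_mono) auto
  also have "\<dots> \<le> exp (sum M (Y - X))" using M_nonneg by (intro prod_le_exp_sum) auto
  finally have tail: "norm (prod g (Y - X) - 1) \<le> exp (sum M (Y - X)) - 1" by simp
  have "norm (prod g Y - prod g X) = norm (prod g X) * norm (prod g (Y - X) - 1)"
    by (simp add: prod.subset_diff[OF assms(2,1)] algebra_simps norm_mult[symmetric])
  also have "\<dots> \<le> exp (sum M X) * (exp (sum M (Y - X)) - 1)"
    using head tail by (intro mult_mono) auto
  also have "\<dots> = exp (sum M Y) - exp (sum M X)"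
    by (simp add: sum.subset_diff[OF assms(2,1)] exp_add algebra_simps)
  finally show ?thesis .
qed

text \<open>Weierstrass M-test for unordered products: by the previous lemma the oscillation of the
  partial products is controlled by that of the convergent net \<open>exp (\<Sum>p\<in>X. M p)\<close>.\<close>

lemma uniform_limit_prod_finite_subsets:
  fixes g :: "'a \<Rightarrow> 'c \<Rightarrow> 'b :: {real_normed_div_algebra, comm_ring_1}"
  assumes "M summable_on I" and bound: "\<And>p s. p \<in> I \<Longrightarrow> s \<in> K \<Longrightarrow> norm (g p s - 1) \<le> M p"
    and lim: "\<And>s. s \<in> K \<Longrightarrow> ((\<lambda>X. \<Prod>p\<in>X. g p s) \<longlongrightarrow> P s) (finite_subsets_at_top I)"
  shows "uniform_limit K (\<lambda>X s. \<Prod>p\<in>X. g p s) P (finite_subsets_at_top I)"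
  unfolding uniform_limit_iff
proof (intro allI impI)
  fix e :: real assume "e > 0"
  have "(sum M \<longlongrightarrow> infsum M I) (finite_subsets_at_top I)"
    using has_sum_infsum[OF assms(1)] unfolding has_sum_def .
  hence "((\<lambda>X. exp (sum M X)) \<longlongrightarrow> exp (infsum M I)) (finite_subsets_at_top I)"
    by (rule tendsto_exp)
  from tendstoD[OF this, of "e/4"] \<open>e > 0\<close> obtain X0 where X0: "finite X0" "X0 \<subseteq> I"
    and close: "\<And>Y. finite Y \<Longrightarrow> X0 \<subseteq> Y \<Longrightarrow> Y \<subseteq> I \<Longrightarrow> dist (exp (sum M Y)) (exp (infsum M I)) < e/4"
    unfolding eventually_finite_subsets_at_top by auto
  show "eventually (\<lambda>X. \<forall>s\<in>K. dist (\<Prod>p\<in>X. g p s) (P s) < e) (finite_subsets_at_top I)"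
    unfolding eventually_finite_subsets_at_top
  proof (intro exI[of _ X0] conjI allI impI ballI)
    fix X s assume X: "finite X \<and> X0 \<subseteq> X \<and> X \<subseteq> I" and s: "s \<in> K"
    have "eventually (\<lambda>Y. norm ((\<Prod>p\<in>Y. g p s) - (\<Prod>p\<in>X. g p s)) \<le> e/2) (finite_subsets_at_top I)"
      unfolding eventually_finite_subsets_at_top
    proof (intro exI[of _ X] conjI allI impI)
      fix Y assume Y: "finite Y \<and> X \<subseteq> Y \<and> Y \<subseteq> I"
      have "norm ((\<Prod>p\<in>Y. g p s) - (\<Prod>p\<in>X. g p s)) \<le> exp (sum M Y) - exp (sum M X)"
        using Y bound s by (intro norm_prod_diff_le_exp_sum) auto
      also have "\<dots> \<le> e/2"
      proof -
        have "dist (exp (sum M Y)) (exp (infsum M I)) < e/4"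
          "dist (exp (sum M X)) (exp (infsum M I)) < e/4"
          using close[of Y] close[of X] X Y by auto
        thus ?thesis unfolding dist_real_def by linarith
      qed
      finally show "norm ((\<Prod>p\<in>Y. g p s) - (\<Prod>p\<in>X. g p s)) \<le> e/2" .
    qed (use X in auto)
    moreover have "((\<lambda>Y. norm ((\<Prod>p\<in>Y. g p s) - (\<Prod>p\<in>X. g p s))) \<longlongrightarrow>
        norm (P s - (\<Prod>p\<in>X. g p s))) (finite_subsets_at_top I)"
      by (intro tendsto_intros lim s)
    ultimately have "norm (P s - (\<Prod>p\<in>X. g p s)) \<le> e/2"
      by (intro tendsto_upperbound) auto
    thus "dist (\<Prod>p\<in>X. g p s) (P s) < e" using \<open>e > 0\<close> by (simp add: dist_norm norm_minus_commute)
  qed (use X0 in auto)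
qed

text \<open>A dominated-convergence estimate: the finitely many largest terms are \<open>o(\<sigma>)\<close> by the
  uniform bound \<open>\<sigma> g(\<sigma>)\<close>, and the remaining tail is at most \<open>\<sigma>\<close> times a small tail of \<open>M\<close>.\<close>

lemma eventually_infsum_le_linear:
  fixes u :: "real \<Rightarrow> 'a \<Rightarrow> real"
  assumes M: "M summable_on J" and g: "(g \<longlongrightarrow> 0) at_top" and "0 < \<epsilon>"
    and bound: "eventually (\<lambda>\<sigma>. \<forall>p\<in>J. 0 \<le> u \<sigma> p \<and> u \<sigma> p \<le> \<sigma> * M p \<and> u \<sigma> p \<le> \<sigma> * g \<sigma>) at_top"
  shows "eventually (\<lambda>\<sigma>. u \<sigma> summable_on J \<and> infsum (u \<sigma>) J \<le> \<epsilon> * \<sigma>) at_top"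
proof -
  obtain T where T: "finite T" "T \<subseteq> J" and close: "dist (sum M T) (infsum M J) \<le> \<epsilon> / 2"
    using has_sum_finite_approximation[OF has_sum_infsum[OF M], of "\<epsilon> / 2"] \<open>0 < \<epsilon>\<close> by auto
  have "infsum M (J - T) = infsum M J - sum M T"
    using infsum_Diff[OF M summable_on_finite[OF T(1)] T(2)] T(1) by simp
  hence tail: "infsum M (J - T) \<le> \<epsilon> / 2" using close unfolding dist_real_def by linarith
  have "((\<lambda>\<sigma>. real (card T) * g \<sigma>) \<longlongrightarrow> 0) at_top"
    using tendsto_mult_right_zero[OF g] .
  hence "eventually (\<lambda>\<sigma>. real (card T) * g \<sigma> < \<epsilon> / 2) at_top"
    using \<open>0 < \<epsilon>\<close> by (intro order_tendstoD(2)) auto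
  thus ?thesis using bound eventually_ge_at_top[of 0]
  proof eventually_elim
    case (elim \<sigma>)
    have u: "u \<sigma> summable_on J"
      using elim(2) by (intro summable_on_comparison_test[OF summable_on_cmult_right[OF M, of \<sigma>]]) auto
    have "sum (u \<sigma>) T \<le> real (card T) * (\<sigma> * g \<sigma>)"
      using elim(2) T(2) by (intro sum_bounded_above) auto
    also have "\<dots> = \<sigma> * (real (card T) * g \<sigma>)" by (simp add: mult_ac)
    also have "\<dots> \<le> \<sigma> * (\<epsilon> / 2)" using elim(1,3) by (intro mult_left_mono) auto
    finally have head: "sum (u \<sigma>) T \<le> \<sigma> * (\<epsilon> / 2)" .
    have "infsum (u \<sigma>) (J - T) \<le> infsum (\<lambda>p. \<sigma> * M p) (J - T)"
      using elim(2) by (intro infsum_mono summable_on_cmult_right summable_on_subset_banach[OF M]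
          summable_on_subset_banach[OF u]) auto
    also have "\<dots> = \<sigma> * infsum M (J - T)" by (rule infsum_cmult_right')
    also have "\<dots> \<le> \<sigma> * (\<epsilon> / 2)" using tail elim(3) by (intro mult_left_mono)
    finally have "infsum (u \<sigma>) (J - T) \<le> \<sigma> * (\<epsilon> / 2)" .
    moreover have "infsum (u \<sigma>) J = sum (u \<sigma>) T + infsum (u \<sigma>) (J - T)"
      using infsum_Diff[OF u summable_on_finite[OF T(1)] T(2)] T(1) by simp
    ultimately show ?case using head u by (simp add: mult.commute)
  qed
qed

section \<open>The bracketed factors\<close>

lemma brfactor_0 [simp]: "brfactor \<rho> 0 = 1"
  by (simp add: brfactor_def)

lemma brfactor_of_real_in_Reals: "brfactor \<rho> (of_real x) \<in> \<real>"
proof (cases "\<rho> \<in> \<real>")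
  case False
  hence "brfactor \<rho> (of_real x) = (1 - of_real x / \<rho>) * cnj (1 - of_real x / \<rho>)"
    by (simp add: brfactor_def)
  also have "\<dots> \<in> \<real>" by (subst complex_mult_cnj) (rule Reals_of_real)
  finally show ?thesis .
qed (auto simp: brfactor_def)

lemma norm_brfactor_of_real:
  assumes "\<rho> \<noteq> 0"
  shows "norm (brfactor \<rho> (of_real x)) =
    (if \<rho> \<in> \<real> then norm (\<rho> - of_real x) / norm \<rho> else norm (\<rho> - of_real x) ^ 2 / norm \<rho> ^ 2)"
proof (cases "\<rho> \<in> \<real>")
  case True
  have "1 - of_real x / \<rho> = (\<rho> - of_real x) / \<rho>" using assms by (simp add: field_simps)
  thus ?thesis using True by (simp add: brfactor_def norm_divide)
next
  case False
  have "(1 - of_real x / \<rho>) * (1 - of_real x / cnj \<rho>) = (\<rho> - of_real x) * (cnj \<rho> - of_real x) / (\<rho> * cnj \<rho>)"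
    using assms by (simp add: field_simps)
  moreover have "norm (cnj \<rho> - of_real x) = norm (\<rho> - of_real x)"
    by (metis Reals_cnj_iff Reals_of_real complex_cnj_diff complex_mod_cnj)
  ultimately show ?thesis using False by (simp add: brfactor_def norm_divide norm_mult power2_eq_square)
qed

lemma norm_of_Real_eq_abs_Re: "z \<in> \<real> \<Longrightarrow> norm z = \<bar>Re z\<bar>"
  by (auto elim: Reals_cases)

lemma norm_brfactor_minus_one_le:
  assumes "\<rho> \<noteq> 0" and "\<bar>Re \<rho>\<bar> \<le> K"
  shows "norm (brfactor \<rho> s - 1) \<le> (2 * K * norm s + norm s ^ 2) / norm \<rho> ^ 2"
proof (cases "\<rho> \<in> \<real>")
  case True
  have "norm (brfactor \<rho> s - 1) = norm s * norm \<rho> / norm \<rho> ^ 2"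
    using True assms(1) by (simp add: brfactor_def norm_divide power2_eq_square)
  also have "\<dots> \<le> (2 * K * norm s + norm s ^ 2) / norm \<rho> ^ 2"
    using norm_of_Real_eq_abs_Re[OF True] assms(2)
    by (intro divide_right_mono) (auto intro: order_trans[OF mult_left_mono] simp: algebra_simps)
  finally show ?thesis .
next
  case False
  have "brfactor \<rho> s - 1 = (s^2 - s * (\<rho> + cnj \<rho>)) / (\<rho> * cnj \<rho>)"
    using False assms(1) by (simp add: brfactor_def field_simps power2_eq_square)
  also have "\<dots> = (s^2 - s * of_real (2 * Re \<rho>)) / of_real (norm \<rho> ^ 2)"
    by (simp only: complex_add_cnj complex_norm_square)
  finally have "norm (brfactor \<rho> s - 1) = norm (s^2 - s * of_real (2 * Re \<rho>)) / norm \<rho> ^ 2"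
    by (simp only: norm_divide norm_of_real abs_of_nonneg[OF zero_le_power2])
  also have "\<dots> \<le> (norm s ^ 2 + norm s * (2 * \<bar>Re \<rho>\<bar>)) / norm \<rho> ^ 2"
    using norm_triangle_ineq4[of "s^2" "s * of_real (2 * Re \<rho>)"]
    by (intro divide_right_mono) (auto simp: norm_mult norm_power)
  also have "\<dots> \<le> (2 * K * norm s + norm s ^ 2) / norm \<rho> ^ 2"
    using mult_left_mono[OF assms(2) norm_ge_zero[of s]]
    by (intro divide_right_mono) (auto simp: algebra_simps)
  finally show ?thesis .
qed

definition bracket_shift :: "complex \<Rightarrow> complex" where
  "bracket_shift \<rho> = 1 / \<rho> + (if \<rho> \<in> \<real> then 0 else 1 / cnj \<rho>)"

lemma primary_factors_eq_brfactor:
  assumes "\<rho> \<noteq> 0"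
  shows "(1 - s/\<rho>) * exp (s/\<rho>) * (if \<rho> \<in> \<real> then 1 else (1 - s/cnj \<rho>) * exp (s/cnj \<rho>))
       = brfactor \<rho> s * exp (s * bracket_shift \<rho>)"
  by (cases "\<rho> \<in> \<real>") (simp_all add: brfactor_def bracket_shift_def exp_add algebra_simps)

lemma norm_bracket_shift_le:
  assumes "\<rho> \<noteq> 0" and "\<bar>Re \<rho>\<bar> \<le> K"
  shows "norm (bracket_shift \<rho>) \<le> 2 * K / norm \<rho> ^ 2"
proof (cases "\<rho> \<in> \<real>")
  case True
  have "norm (bracket_shift \<rho>) = norm \<rho> / norm \<rho> ^ 2"
    using True assms(1) by (simp add: bracket_shift_def norm_divide power2_eq_square)
  also have "\<dots> \<le> 2 * K / norm \<rho> ^ 2"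
    using norm_of_Real_eq_abs_Re[OF True] assms(2) by (intro divide_right_mono) auto
  finally show ?thesis .
next
  case False
  have "bracket_shift \<rho> = (\<rho> + cnj \<rho>) / (\<rho> * cnj \<rho>)"
    using False assms(1) by (simp add: bracket_shift_def field_simps)
  also have "\<dots> = of_real (2 * Re \<rho>) / of_real (norm \<rho> ^ 2)"
    by (simp only: complex_add_cnj complex_norm_square)
  finally have "norm (bracket_shift \<rho>) = 2 * \<bar>Re \<rho>\<bar> / norm \<rho> ^ 2"
    by (simp only: norm_divide norm_of_real abs_of_nonneg[OF zero_le_power2] abs_mult)
  also have "\<dots> \<le> 2 * K / norm \<rho> ^ 2" using assms(2) by (intro divide_right_mono) auto
  finally show ?thesis .
qed

lemma bracket_limit_of_real_in_Reals:
  assumes "((\<lambda>X. \<Prod>p\<in>X. brfactor (fst p) (of_real x)) \<longlongrightarrow> L) (finite_subsets_at_top I)"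
  shows "L \<in> \<real>"
  by (rule Lim_in_closed_set[OF closed_complex_Reals _ finite_subsets_at_top_neq_bot assms])
    (intro always_eventually allI prod_in_Reals brfactor_of_real_in_Reals)

lemma summable_norm_brfactor_minus_one:
  assumes "(\<lambda>p. 1 / norm (fst p)^2) summable_on I"
    and "\<And>p. p \<in> I \<Longrightarrow> fst p \<noteq> 0 \<and> \<bar>Re (fst p)\<bar> \<le> K"
  shows "(\<lambda>p. norm (brfactor (fst p) s - 1)) summable_on I"
proof (rule summable_on_comparison_test[OF summable_on_cmult_right[OF assms(1)]])
  show "norm (brfactor (fst p) s - 1) \<le> (2 * K * norm s + norm s^2) * (1 / norm (fst p)^2)"
    if "p \<in> I" for p
    using norm_brfactor_minus_one_le[of "fst p" K s] assms(2)[OF that] by simp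
qed simp

lemma summable_bracket_shift:
  assumes "(\<lambda>p. 1 / norm (fst p)^2) summable_on I"
    and "\<And>p. p \<in> I \<Longrightarrow> fst p \<noteq> 0 \<and> \<bar>Re (fst p)\<bar> \<le> K"
  shows "(\<lambda>p. bracket_shift (fst p)) summable_on I"
proof (rule abs_summable_summable, rule summable_on_comparison_test)
  show "(\<lambda>p. 2 * K * (1 / norm (fst p)^2)) summable_on I"
    using assms(1) by (rule summable_on_cmult_right)
qed (use norm_bracket_shift_le assms(2) in auto)

lemma uniform_limit_bracket_product:
  assumes "(\<lambda>p. 1 / norm (fst p)^2) summable_on I"
    and bound: "\<And>p. p \<in> I \<Longrightarrow> fst p \<noteq> 0 \<and> \<bar>Re (fst p)\<bar> \<le> K"
    and "\<And>s. ((\<lambda>X. \<Prod>p\<in>X. brfactor (fst p) s) \<longlongrightarrow> P s) (finite_subsets_at_top I)"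
    and "compact S"
  shows "uniform_limit S (\<lambda>X s. \<Prod>p\<in>X. brfactor (fst p) s) P (finite_subsets_at_top I)"
proof -
  obtain R where R: "\<And>s. s \<in> S \<Longrightarrow> norm s \<le> R"
    using compact_imp_bounded[OF assms(4)] unfolding bounded_iff by blast
  have K: "0 \<le> K" if "p \<in> I" for p using bound[OF that] by linarith
  show ?thesis
  proof (rule uniform_limit_prod_finite_subsets)
    show "(\<lambda>p. (2 * K * R + R^2) * (1 / norm (fst p)^2)) summable_on I"
      using assms(1) by (rule summable_on_cmult_right)
    fix p s assume p: "p \<in> I" and s: "s \<in> S"
    have "norm (brfactor (fst p) s - 1) \<le> (2 * K * norm s + norm s^2) * (1 / norm (fst p)^2)"
      using norm_brfactor_minus_one_le[of "fst p" K s] bound[OF p] by simp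
    also have "\<dots> \<le> (2 * K * R + R^2) * (1 / norm (fst p)^2)"
      using R[OF s] K[OF p] by (intro mult_right_mono add_mono mult_left_mono power_mono) auto
    finally show "norm (brfactor (fst p) s - 1) \<le> (2 * K * R + R^2) * (1 / norm (fst p)^2)" .
  qed (use assms(3) in auto)
qed

section \<open>Regrouping the Hadamard product\<close>

definition upper_part :: "(complex \<times> 'a) set \<Rightarrow> (complex \<times> 'a) set" where
  "upper_part Z = {p \<in> Z. fst p \<in> \<real> \<or> 0 < Im (fst p)}"

definition with_conjugates :: "(complex \<times> 'a) set \<Rightarrow> (complex \<times> 'a) set" where
  "with_conjugates X = X \<union> apfst cnj ` {p \<in> X. fst p \<notin> \<real>}"

lemma apfst_cnj_cnj [simp]: "apfst cnj (apfst cnj p) = p"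
  by (cases p) simp

lemma prod_index_eq_upper_part: "prod_index F = upper_part {p \<in> zeros_mult F. fst p \<noteq> 0}"
  by (auto simp: prod_index_def upper_part_def)

lemma apfst_cnj_in_upper_part:
  assumes "\<And>p. p \<in> Z \<Longrightarrow> apfst cnj p \<in> Z" and "q \<in> Z - upper_part Z"
  shows "apfst cnj q \<in> upper_part Z" and "fst (apfst cnj q) \<notin> \<real>"
proof -
  have "fst q \<notin> \<real>" "Im (fst q) \<le> 0" using assms(2) by (auto simp: upper_part_def)
  moreover from this have "Im (fst q) \<noteq> 0" by (auto simp: complex_is_Real_iff)
  ultimately show "apfst cnj q \<in> upper_part Z" "fst (apfst cnj q) \<notin> \<real>"
    using assms by (auto simp: upper_part_def Reals_cnj_iff)
qed

lemma filterlim_with_conjugates: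
  assumes conj: "\<And>p. p \<in> Z \<Longrightarrow> apfst cnj p \<in> Z"
  shows "filterlim with_conjugates (finite_subsets_at_top Z) (finite_subsets_at_top (upper_part Z))"
  unfolding filterlim_def le_filter_def eventually_filtermap
proof (intro allI impI)
  fix P assume "eventually P (finite_subsets_at_top Z)"
  then obtain Y0 where Y0: "finite Y0" "Y0 \<subseteq> Z"
    and P: "\<And>Y. finite Y \<Longrightarrow> Y0 \<subseteq> Y \<Longrightarrow> Y \<subseteq> Z \<Longrightarrow> P Y"
    unfolding eventually_finite_subsets_at_top by metis
  define X0 where "X0 = (Y0 \<inter> upper_part Z) \<union> apfst cnj ` (Y0 - upper_part Z)"
  have "finite X0" "X0 \<subseteq> upper_part Z"
    unfolding X0_def using Y0 apfst_cnj_in_upper_part[OF conj] by auto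
  thus "eventually (\<lambda>X. P (with_conjugates X)) (finite_subsets_at_top (upper_part Z))"
    unfolding eventually_finite_subsets_at_top
  proof (intro exI[of _ X0] conjI allI impI)
    fix X assume X: "finite X \<and> X0 \<subseteq> X \<and> X \<subseteq> upper_part Z"
    have "Y0 \<subseteq> with_conjugates X"
    proof
      fix q assume q: "q \<in> Y0"
      show "q \<in> with_conjugates X"
      proof (cases "q \<in> upper_part Z")
        case False
        hence "q \<in> Z - upper_part Z" using q Y0 by auto
        hence "apfst cnj q \<in> X" "fst (apfst cnj q) \<notin> \<real>"
          using q X apfst_cnj_in_upper_part[OF conj] unfolding X0_def by auto
        hence "apfst cnj (apfst cnj q) \<in> apfst cnj ` {p \<in> X. fst p \<notin> \<real>}" by blast
        thus ?thesis by (simp add: with_conjugates_def)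
      qed (use q X in \<open>auto simp: with_conjugates_def X0_def\<close>)
    qed
    moreover have "with_conjugates X \<subseteq> Z"
      using X conj by (auto simp: with_conjugates_def upper_part_def)
    ultimately show "P (with_conjugates X)"
      using X by (intro P) (auto simp: with_conjugates_def)
  qed
qed

lemma prod_with_conjugates:
  assumes "finite X" and "X \<subseteq> upper_part Z" and nz: "\<And>p. p \<in> Z \<Longrightarrow> fst p \<noteq> 0"
  shows "(\<Prod>q\<in>with_conjugates X. (1 - s / fst q) * exp (s / fst q)) =
         (\<Prod>p\<in>X. brfactor (fst p) s) * exp (s * (\<Sum>p\<in>X. bracket_shift (fst p)))"
proof -
  define E where "E = (\<lambda>q::complex \<times> 'a. (1 - s / fst q) * exp (s / fst q))"
  define D where "D = {p \<in> X. fst p \<notin> \<real>}"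
  have disjoint: "X \<inter> apfst cnj ` D = {}"
  proof (intro equals0I)
    fix q assume "q \<in> X \<inter> apfst cnj ` D"
    then obtain p where p: "p \<in> X" "fst p \<notin> \<real>" "apfst cnj p \<in> X" by (auto simp: D_def)
    hence "0 < Im (fst p)" "0 < Im (fst (apfst cnj p)) \<or> fst (apfst cnj p) \<in> \<real>"
      using assms(2) by (auto simp: upper_part_def)
    with p(2) show False by (auto simp: complex_is_Real_iff)
  qed
  have inj: "inj_on (apfst cnj) D" by (metis apfst_cnj_cnj inj_on_inverseI)
  have "(\<Prod>q\<in>with_conjugates X. E q) = (\<Prod>q\<in>X. E q) * (\<Prod>q\<in>apfst cnj ` D. E q)"
    unfolding with_conjugates_def D_def[symmetric] using assms(1) disjoint
    by (intro prod.union_disjoint) (auto simp: D_def)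
  also have "(\<Prod>q\<in>apfst cnj ` D. E q) = (\<Prod>q\<in>D. E (apfst cnj q))"
    using prod.reindex[OF inj] by simp
  also have "(\<Prod>q\<in>D. E (apfst cnj q)) = (\<Prod>q\<in>X. if fst q \<notin> \<real> then E (apfst cnj q) else 1)"
    unfolding D_def using prod.inter_filter[OF assms(1), of "\<lambda>q. E (apfst cnj q)" "\<lambda>q. fst q \<notin> \<real>"]
    by simp
  also have "(\<Prod>q\<in>X. E q) * \<dots> = (\<Prod>q\<in>X. brfactor (fst q) s * exp (s * bracket_shift (fst q)))"
    unfolding prod.distrib[symmetric] using assms(2) nz
    by (intro prod.cong refl) (auto simp: E_def upper_part_def primary_factors_eq_brfactor[symmetric])
  also have "\<dots> = (\<Prod>p\<in>X. brfactor (fst p) s) * exp (s * (\<Sum>p\<in>X. bracket_shift (fst p)))"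
    by (simp add: prod.distrib exp_sum[OF assms(1)] sum_distrib_left)
  finally show ?thesis unfolding E_def .
qed

lemma tendsto_regrouped_product:
  assumes conj: "\<And>p. p \<in> Z \<Longrightarrow> apfst cnj p \<in> Z" and nz: "\<And>p. p \<in> Z \<Longrightarrow> fst p \<noteq> 0"
    and lim: "((\<lambda>X. c * (\<Prod>p\<in>X. (1 - s / fst p) * exp (s / fst p))) \<longlongrightarrow> L) (finite_subsets_at_top Z)"
  shows "((\<lambda>X. c * ((\<Prod>p\<in>X. brfactor (fst p) s) * exp (s * (\<Sum>p\<in>X. bracket_shift (fst p)))))
           \<longlongrightarrow> L) (finite_subsets_at_top (upper_part Z))"
proof (rule Lim_transform_eventually)
  show "((\<lambda>X. c * (\<Prod>q\<in>with_conjugates X. (1 - s / fst q) * exp (s / fst q))) \<longlongrightarrow> L)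
      (finite_subsets_at_top (upper_part Z))"
    using filterlim_compose[OF lim filterlim_with_conjugates[OF conj]] .
  show "\<forall>\<^sub>F X in finite_subsets_at_top (upper_part Z).
      c * (\<Prod>q\<in>with_conjugates X. (1 - s / fst q) * exp (s / fst q)) =
      c * ((\<Prod>p\<in>X. brfactor (fst p) s) * exp (s * (\<Sum>p\<in>X. bracket_shift (fst p))))"
    by (intro eventually_finite_subsets_at_top_weakI) (simp add: prod_with_conjugates nz)
qed

lemma tendsto_cancel_exp_factor:
  fixes f g :: "'a \<Rightarrow> 'b :: {real_normed_field, banach}"
  assumes lim: "((\<lambda>x. c * (f x * exp (s * g x))) \<longlongrightarrow> L) F" and "(g \<longlongrightarrow> W) F" and "c \<noteq> 0"
  shows "(f \<longlongrightarrow> L * exp (- (s * W)) / c) F"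
proof -
  have "((\<lambda>x. c * (f x * exp (s * g x)) * exp (- (s * g x)) / c) \<longlongrightarrow> L * exp (- (s * W)) / c) F"
    using assms by (intro tendsto_intros)
  moreover have "c * (f x * exp (s * g x)) * exp (- (s * g x)) / c = f x" for x
    using \<open>c \<noteq> 0\<close> by (simp add: exp_minus_inverse)
  ultimately show ?thesis by simp
qed

lemma genus_le_one_summable_prod_index:
  assumes "genus_le_one F"
  shows "(\<lambda>p. 1 / norm (fst p)^2) summable_on prod_index F"
proof -
  have "(\<lambda>p. 1 / norm (fst p)^2) summable_on {p \<in> zeros_mult F. fst p \<noteq> 0}"
    using assms unfolding genus_le_one_def by blast
  thus ?thesis by (rule summable_on_subset_banach) (auto simp: prod_index_def)
qed

text \<open>The exponents \<open>s (1/\<rho> + 1/cnj \<rho>) = 2 s Re \<rho> / \<bar>\<rho>\<bar>\<^sup>2\<close> left over by the regrouping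
  converge absolutely because the real parts of the zeros are bounded; they are absorbed into the
  linear exponent.\<close>

lemma genus_le_one_bracket_factorization:
  assumes genus: "genus_le_one F"
    and conj: "\<And>p. p \<in> zeros_mult F \<Longrightarrow> apfst cnj p \<in> zeros_mult F"
    and re_bound: "\<And>z. F z = 0 \<Longrightarrow> \<bar>Re z\<bar> \<le> K"
  obtains P :: "complex \<Rightarrow> complex" and a :: complex and m :: nat and B :: complex
  where "\<And>s. ((\<lambda>X. \<Prod>p\<in>X. brfactor (fst p) s) \<longlongrightarrow> P s) (finite_subsets_at_top (prod_index F))"
    and "\<And>s. F s = exp a * s ^ m * exp (B * s) * P s"
proof -
  define Z where "Z = {p \<in> zeros_mult F. fst p \<noteq> 0}"
  define I where "I = prod_index F"
  obtain a b :: complex and m :: nat where lim_genus: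
    "\<And>s. ((\<lambda>X. exp (a + b * s) * s ^ m * (\<Prod>p\<in>X. (1 - s / fst p) * exp (s / fst p))) \<longlongrightarrow> F s)
           (finite_subsets_at_top Z)"
    using genus unfolding genus_le_one_def Z_def by blast
  have I: "I = upper_part Z" unfolding I_def Z_def by (rule prod_index_eq_upper_part)
  have Z_conj: "apfst cnj p \<in> Z" if "p \<in> Z" for p
    using that conj by (auto simp: Z_def)
  have Z_nz: "fst p \<noteq> 0" if "p \<in> Z" for p using that by (simp add: Z_def)
  have I_bound: "fst p \<noteq> 0 \<and> \<bar>Re (fst p)\<bar> \<le> K" if "p \<in> I" for p
    using that re_bound by (auto simp: I_def prod_index_def zeros_mult_def)
  have "(\<lambda>p. bracket_shift (fst p)) summable_on I"
    unfolding I_def using genus_le_one_summable_prod_index[OF genus] I_bound[unfolded I_def]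
    by (rule summable_bracket_shift)
  then obtain W where W: "((\<lambda>X. \<Sum>p\<in>X. bracket_shift (fst p)) \<longlongrightarrow> W) (finite_subsets_at_top I)"
    unfolding summable_on_def has_sum_def by blast
  have lim_brackets: "((\<lambda>X. exp (a + b * s) * s ^ m *
      ((\<Prod>p\<in>X. brfactor (fst p) s) * exp (s * (\<Sum>p\<in>X. bracket_shift (fst p))))) \<longlongrightarrow> F s)
      (finite_subsets_at_top I)" for s
    unfolding I using Z_conj Z_nz lim_genus by (rule tendsto_regrouped_product)
  define P where "P = (\<lambda>s. if s = 0 then 1 else F s * exp (- (s * W)) / (exp (a + b * s) * s ^ m))"
  show thesis
  proof (rule that[of _ a m "b + W"])
    fix s
    show "((\<lambda>X. \<Prod>p\<in>X. brfactor (fst p) s) \<longlongrightarrow> P s) (finite_subsets_at_top (prod_index F))"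
    proof (cases "s = 0")
      case False
      hence nz: "exp (a + b * s) * s ^ m \<noteq> 0" by simp
      have "P s = F s * exp (- (s * W)) / (exp (a + b * s) * s ^ m)"
        using False by (simp add: P_def)
      thus ?thesis using tendsto_cancel_exp_factor[OF lim_brackets W nz] unfolding I_def by simp
    qed (simp add: P_def)
    show "F s = exp a * s ^ m * exp ((b + W) * s) * P s"
    proof (cases "s = 0")
      case True
      have "((\<lambda>X. exp (a + b * s) * s ^ m * (\<Prod>p\<in>X. (1 - s / fst p) * exp (s / fst p)))
            \<longlongrightarrow> exp a * 0 ^ m) (finite_subsets_at_top Z)"
        using True by simp
      hence "F s = exp a * 0 ^ m" using lim_genus tendsto_unique finite_subsets_at_top_neq_bot by blast
      thus ?thesis using True by (simp add: P_def)
    qed (simp add: P_def exp_add exp_minus field_simps)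
  qed
qed

lemma Im_eq_0_if_exp_Reals:
  assumes "\<And>t::real. 0 \<le> t \<Longrightarrow> exp (c * of_real t) \<in> \<real>"
  shows "Im c = 0"
proof (rule ccontr)
  assume "Im c \<noteq> 0"
  define t where "t = pi / (2 * \<bar>Im c\<bar>)"
  have "Im c * t = pi/2 \<or> Im c * t = - (pi/2)"
    unfolding t_def using \<open>Im c \<noteq> 0\<close> by (cases "Im c > 0") (auto simp: field_simps)
  hence "sin (Im c * t) \<noteq> 0"
    by (elim disjE) (metis sin_pi_half one_neq_zero, metis sin_pi_half sin_minus neg_equal_0_iff_equal one_neq_zero)
  moreover have "Im (exp (c * of_real t)) = 0"
    using assms[of t] by (simp add: t_def complex_is_Real_iff)
  ultimately show False by (simp add: Im_exp)
qed

lemma Im_exponent_eq_0: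
  fixes F P :: "complex \<Rightarrow> complex"
  assumes rep: "\<And>s. F s = C * s ^ m * exp (B * s) * P s"
    and F_real: "\<forall>x::real. F (of_real x) \<in> \<real>" and P_real: "\<And>x::real. P (of_real x) \<in> \<real>"
    and "eventually (\<lambda>\<sigma>. F (of_real \<sigma>) \<noteq> 0) at_top"
  shows "Im B = 0"
proof (rule Im_eq_0_if_exp_Reals)
  obtain \<sigma>0 where \<sigma>0: "\<And>\<sigma>. \<sigma> \<ge> \<sigma>0 \<Longrightarrow> F (of_real \<sigma>) \<noteq> 0"
    using assms(4) by (auto simp: eventually_at_top_linorder)
  define Q where "Q = (\<lambda>\<sigma>::real. F (of_real \<sigma>) / (of_real \<sigma> ^ m * P (of_real \<sigma>)))"
  have Q: "Q \<sigma> = C * exp (B * of_real \<sigma>)" if "\<sigma> \<ge> \<sigma>0" for \<sigma>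
    using \<sigma>0[OF that] unfolding Q_def rep[of "of_real \<sigma>"] by (simp add: field_simps)
  fix t :: real assume "0 \<le> t"
  hence "Q (\<sigma>0 + t) / Q \<sigma>0 = exp (B * of_real t)"
    using Q[of "\<sigma>0 + t"] Q[of \<sigma>0] \<sigma>0[of \<sigma>0] rep[of "of_real \<sigma>0"]
    by (simp add: distrib_left exp_add)
  moreover have "Q \<sigma> \<in> \<real>" for \<sigma>
    unfolding Q_def using F_real P_real by (intro Reals_divide Reals_mult Reals_power) auto
  ultimately show "exp (B * of_real t) \<in> \<real>" by (metis Reals_divide)
qed

section \<open>Comparing \<open>P(\<sigma>)\<close> with \<open>P(1 - \<sigma>)\<close>\<close>

text \<open>The defect \<open>u\<close> is defined by \<open>\<bar>\<sigma> - \<rho>\<bar>\<^sup>2 = (1 + u) \<bar>1 - \<sigma> - \<rho>\<bar>\<^sup>2\<close>; it is nonnegative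
  as long as \<open>\<rho>\<close> lies to the left of the critical line.\<close>

definition reflection_defect :: "real \<Rightarrow> complex \<Rightarrow> real" where
  "reflection_defect \<sigma> \<rho> = (2*\<sigma> - 1) * (1 - 2 * Re \<rho>) / ((\<sigma> - 1 + Re \<rho>)^2 + (Im \<rho>)^2)"

lemma norm_diff_of_real_squared: "norm (\<rho> - of_real x) ^ 2 = (Re \<rho> - x)^2 + (Im \<rho>)^2"
  by (simp add: cmod_power2)

lemma reflection_defect_eq:
  assumes "\<rho> \<noteq> of_real (1 - \<sigma>)"
  shows "norm (\<rho> - of_real \<sigma>) ^ 2 = (1 + reflection_defect \<sigma> \<rho>) * norm (\<rho> - of_real (1 - \<sigma>)) ^ 2"
proof -
  have "(\<sigma> - 1 + Re \<rho>)^2 + (Im \<rho>)^2 \<noteq> 0"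
    using assms by (auto simp: complex_eq_iff)
  thus ?thesis unfolding norm_diff_of_real_squared reflection_defect_def
    by (simp add: field_simps power2_eq_square)
qed

lemma reflection_defect_nonneg:
  assumes "Re \<rho> \<le> 1/2" and "1 - \<sigma> < Re \<rho>"
  shows "0 \<le> reflection_defect \<sigma> \<rho>"
  using assms unfolding reflection_defect_def by (intro divide_nonneg_nonneg mult_nonneg_nonneg) auto

lemma norm_brfactor_le_reflection_defect:
  assumes "\<rho> \<noteq> 0" and "Re \<rho> \<le> 1/2" and "1 - \<sigma> < Re \<rho>"
  shows "norm (brfactor \<rho> (of_real \<sigma>)) \<le> (1 + reflection_defect \<sigma> \<rho>) * norm (brfactor \<rho> (of_real (1 - \<sigma>)))"
proof -
  define a b u where "a = norm (\<rho> - of_real \<sigma>)" and "b = norm (\<rho> - of_real (1 - \<sigma>))"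
    and "u = reflection_defect \<sigma> \<rho>"
  have "\<rho> \<noteq> of_real (1 - \<sigma>)" using assms(3) by auto
  hence sq: "a^2 = (1 + u) * b^2" unfolding a_def b_def u_def by (rule reflection_defect_eq)
  have u: "0 \<le> u" unfolding u_def using assms(2,3) by (rule reflection_defect_nonneg)
  have "(1 + u) * b^2 \<le> (1 + u)^2 * b^2"
    using u by (intro mult_right_mono) (auto simp: power2_eq_square)
  hence "a^2 \<le> ((1 + u) * b)^2" by (simp only: sq power_mult_distrib)
  moreover have "0 \<le> (1 + u) * b" using u unfolding b_def by simp
  ultimately have "a \<le> (1 + u) * b" by (rule power2_le_imp_le)
  hence real_case: "a / norm \<rho> \<le> (1 + u) * (b / norm \<rho>)"
    by (simp add: divide_right_mono)
  have nonreal_case: "a^2 / norm \<rho>^2 \<le> (1 + u) * (b^2 / norm \<rho>^2)"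
    by (simp add: sq)
  show ?thesis
  proof (cases "\<rho> \<in> \<real>")
    case True
    thus ?thesis using real_case unfolding a_def b_def u_def
      by (simp only: norm_brfactor_of_real[OF assms(1)] if_True)
  next
    case False
    thus ?thesis using nonreal_case unfolding a_def b_def u_def
      by (simp only: norm_brfactor_of_real[OF assms(1)] if_False)
  qed
qed

lemma reflection_defect_le:
  assumes "\<rho> \<noteq> 0" and "\<bar>Re \<rho>\<bar> \<le> K" and "Re \<rho> \<le> 1/2" and "K + 2 \<le> \<sigma>"
  shows "reflection_defect \<sigma> \<rho> \<le> \<sigma> * (2 * (1 + 2*K) / (\<sigma> - 1 - K)^2)"
    and "reflection_defect \<sigma> \<rho> \<le> \<sigma> * (2 * (1 + 2*K) * (K^2 + 1) / norm \<rho>^2)"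
proof -
  define N Q where "N = (2*\<sigma> - 1) * (1 - 2 * Re \<rho>)" and "Q = (\<sigma> - 1 + Re \<rho>)^2 + (Im \<rho>)^2"
  have u: "reflection_defect \<sigma> \<rho> = N / Q" unfolding reflection_defect_def N_def Q_def ..
  have "0 \<le> 2*\<sigma> - 1" "2*\<sigma> - 1 \<le> 2*\<sigma>" "0 \<le> 1 - 2 * Re \<rho>" "1 - 2 * Re \<rho> \<le> 1 + 2*K"
    using assms by auto
  hence "0 \<le> N" "N \<le> (2*\<sigma>) * (1 + 2*K)"
    unfolding N_def by (auto intro: mult_mono)
  hence N: "0 \<le> N" "N \<le> \<sigma> * (2 * (1 + 2*K))" by (simp_all add: mult_ac)
  have "1 \<le> \<sigma> - 1 - K" "\<sigma> - 1 - K \<le> \<sigma> - 1 + Re \<rho>" using assms by auto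
  hence "1 \<le> (\<sigma> - 1 - K)^2" "(\<sigma> - 1 - K)^2 \<le> (\<sigma> - 1 + Re \<rho>)^2"
    by (auto intro: power_mono one_le_power)
  hence Q: "1 \<le> (\<sigma> - 1 - K)^2" "(\<sigma> - 1 - K)^2 \<le> Q" "1 + (Im \<rho>)^2 \<le> Q"
    unfolding Q_def by (auto intro: add_increasing2)
  show "reflection_defect \<sigma> \<rho> \<le> \<sigma> * (2 * (1 + 2*K) / (\<sigma> - 1 - K)^2)"
    unfolding u times_divide_eq_right using N Q by (intro frac_le) auto
  have "(Re \<rho>)^2 \<le> K^2" using assms(2) by (metis abs_le_square_iff abs_of_nonneg abs_ge_zero order_trans)
  moreover have "(K^2 + 1) * (1 + (Im \<rho>)^2) = K^2 + (Im \<rho>)^2 + 1 + K^2 * (Im \<rho>)^2"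
    by (simp add: algebra_simps)
  moreover have "0 \<le> K^2 * (Im \<rho>)^2" by simp
  ultimately have "norm \<rho>^2 \<le> (K^2 + 1) * (1 + (Im \<rho>)^2)"
    unfolding cmod_power2 by linarith
  also have "\<dots> \<le> (K^2 + 1) * Q" using Q(3) by (intro mult_left_mono) auto
  finally have "N * norm \<rho>^2 \<le> N * ((K^2 + 1) * Q)" using N by (intro mult_left_mono)
  also have "\<dots> \<le> \<sigma> * (2 * (1 + 2*K)) * ((K^2 + 1) * Q)"
    using N Q by (intro mult_right_mono) auto
  finally have "N * norm \<rho>^2 \<le> \<sigma> * (2 * (1 + 2*K) * (K^2 + 1)) * Q" by (simp add: mult_ac)
  moreover have "0 < Q" "0 < norm \<rho>^2" using Q assms(1) by auto
  ultimately show "reflection_defect \<sigma> \<rho> \<le> \<sigma> * (2 * (1 + 2*K) * (K^2 + 1) / norm \<rho>^2)"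
    unfolding u times_divide_eq_right by (simp add: divide_le_eq le_divide_eq mult_ac)
qed

lemma norm_brfactor_le_three:
  assumes "\<rho> \<noteq> 0" and "norm \<rho> \<le> L" and "4 * (L + 1) \<le> \<sigma>"
  shows "norm (brfactor \<rho> (of_real \<sigma>)) \<le> 3 * norm (brfactor \<rho> (of_real (1 - \<sigma>)))"
proof -
  define a b where "a = norm (\<rho> - of_real \<sigma>)" and "b = norm (\<rho> - of_real (1 - \<sigma>))"
  have L: "0 \<le> L" using assms(2) norm_ge_zero order_trans by blast
  have "a \<le> norm \<rho> + \<sigma>" unfolding a_def using norm_triangle_ineq4[of \<rho> "of_real \<sigma>"] assms L by simp
  moreover have "\<sigma> - 1 - norm \<rho> \<le> b"
    unfolding b_def using norm_triangle_ineq3[of "of_real (1 - \<sigma>)" \<rho>] assms L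
    by (simp add: norm_minus_commute del: of_real_diff)
  ultimately have "3 * a \<le> 5 * b" using assms(2,3) by argo
  hence ab: "a \<le> (5/3) * b" by simp
  have a0: "0 \<le> a" unfolding a_def by simp
  have "a^2 \<le> ((5/3) * b)^2" using ab a0 by (intro power_mono) auto
  also have "\<dots> = 25/9 * b^2" by (simp add: power2_eq_square)
  also have "\<dots> \<le> 3 * b^2" using zero_le_power2[of b] by linarith
  finally have "a^2 \<le> 3 * b^2" .
  moreover have "a \<le> 3 * b" using ab a0 by simp
  ultimately show ?thesis
    using norm_brfactor_of_real[OF assms(1), of \<sigma>] norm_brfactor_of_real[OF assms(1), of "1 - \<sigma>"]
    unfolding a_def b_def by (cases "\<rho> \<in> \<real>") (simp_all add: divide_right_mono)
qed

lemma norm_prod_brfactor_reflection_le: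
  assumes "finite X" and "finite E" and nz: "\<And>p. p \<in> X \<Longrightarrow> fst p \<noteq> 0"
    and strip: "\<And>p. p \<in> X - E \<Longrightarrow> Re (fst p) \<le> 1/2 \<and> 1 - \<sigma> < Re (fst p)"
    and exceptional: "\<And>p. p \<in> X \<inter> E \<Longrightarrow> norm (fst p) \<le> L" and "4 * (L + 1) \<le> \<sigma>"
  shows "norm (\<Prod>p\<in>X. brfactor (fst p) (of_real \<sigma>)) \<le>
    3 ^ card E * exp (\<Sum>p\<in>X - E. reflection_defect \<sigma> (fst p)) * norm (\<Prod>p\<in>X. brfactor (fst p) (of_real (1 - \<sigma>)))"
proof -
  define h where "h = (\<lambda>p. if p \<in> E then 3 else 1 + reflection_defect \<sigma> (fst p))"
  have defect: "0 \<le> reflection_defect \<sigma> (fst p)" if "p \<in> X - E" for p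
    using strip[OF that] by (intro reflection_defect_nonneg) auto
  have "norm (\<Prod>p\<in>X. brfactor (fst p) (of_real \<sigma>)) = (\<Prod>p\<in>X. norm (brfactor (fst p) (of_real \<sigma>)))"
    by (simp add: prod_norm)
  also have "\<dots> \<le> (\<Prod>p\<in>X. h p * norm (brfactor (fst p) (of_real (1 - \<sigma>))))"
  proof (intro prod_mono conjI norm_ge_zero)
    fix p assume p: "p \<in> X"
    show "norm (brfactor (fst p) (of_real \<sigma>)) \<le> h p * norm (brfactor (fst p) (of_real (1 - \<sigma>)))"
    proof (cases "p \<in> E")
      case True
      thus ?thesis unfolding h_def using norm_brfactor_le_three[OF nz[OF p] exceptional] p assms(6) by simp
    next
      case False
      thus ?thesis unfolding h_def using norm_brfactor_le_reflection_defect[OF nz[OF p]] strip p by simp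
    qed
  qed
  also have "\<dots> = prod h X * norm (\<Prod>p\<in>X. brfactor (fst p) (of_real (1 - \<sigma>)))"
    by (simp add: prod.distrib prod_norm)
  also have "prod h X \<le> 3 ^ card E * exp (\<Sum>p\<in>X - E. reflection_defect \<sigma> (fst p))"
  proof -
    have "prod h X = 3 ^ card (X \<inter> E) * (\<Prod>p\<in>X - E. 1 + reflection_defect \<sigma> (fst p))"
      unfolding h_def
      using prod.If_cases[OF assms(1), of "\<lambda>p. p \<in> E" "\<lambda>_. 3" "\<lambda>p. 1 + reflection_defect \<sigma> (fst p)"]
      by (simp add: Diff_eq)
    also have "\<dots> \<le> 3 ^ card E * exp (\<Sum>p\<in>X - E. reflection_defect \<sigma> (fst p))"
      using defect assms(2)
      by (intro mult_mono power_increasing card_mono prod_le_exp_sum prod_nonneg) auto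
    finally show ?thesis .
  qed
  finally show ?thesis by (simp add: mult_right_mono)
qed

lemma eventually_sum_reflection_defect_le:
  fixes I :: "(complex \<times> 'a) set"
  assumes summable: "(\<lambda>p. 1 / norm (fst p)^2) summable_on I"
    and I: "\<And>p. p \<in> I \<Longrightarrow> fst p \<noteq> 0 \<and> \<bar>Re (fst p)\<bar> \<le> K \<and> Re (fst p) \<le> 1/2"
    and "0 < \<epsilon>"
  shows "eventually (\<lambda>\<sigma>. (\<lambda>p. reflection_defect \<sigma> (fst p)) summable_on I \<and>
           (\<Sum>\<^sub>\<infinity>p\<in>I. reflection_defect \<sigma> (fst p)) \<le> \<epsilon> * \<sigma>) at_top"
proof (rule eventually_infsum_le_linear)
  show "(\<lambda>p. 2 * (1 + 2*K) * (K^2 + 1) * (1 / norm (fst p)^2)) summable_on I"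
    using summable by (rule summable_on_cmult_right)
  show "((\<lambda>\<sigma>. 2 * (1 + 2*K) / (\<sigma> - 1 - K)^2) \<longlongrightarrow> 0) at_top" by real_asymp
  show "eventually (\<lambda>\<sigma>. \<forall>p\<in>I. 0 \<le> reflection_defect \<sigma> (fst p)
      \<and> reflection_defect \<sigma> (fst p) \<le> \<sigma> * (2 * (1 + 2*K) * (K^2 + 1) * (1 / norm (fst p)^2))
      \<and> reflection_defect \<sigma> (fst p) \<le> \<sigma> * (2 * (1 + 2*K) / (\<sigma> - 1 - K)^2)) at_top"
    using eventually_ge_at_top[of "K + 2"]
  proof eventually_elim
    case (elim \<sigma>)
    show ?case
    proof
      fix p assume p: "p \<in> I"
      show "0 \<le> reflection_defect \<sigma> (fst p)
          \<and> reflection_defect \<sigma> (fst p) \<le> \<sigma> * (2 * (1 + 2*K) * (K^2 + 1) * (1 / norm (fst p)^2))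
          \<and> reflection_defect \<sigma> (fst p) \<le> \<sigma> * (2 * (1 + 2*K) / (\<sigma> - 1 - K)^2)"
        using reflection_defect_le[of "fst p" K \<sigma>] reflection_defect_nonneg[of "fst p" \<sigma>] I[OF p] elim
        by auto
    qed
  qed
qed (fact \<open>0 < \<epsilon>\<close>)

lemma norm_bracket_limit_reflection_le:
  assumes I: "\<And>p. p \<in> I \<Longrightarrow> fst p \<noteq> 0 \<and> \<bar>Re (fst p)\<bar> \<le> K"
    and "finite E" and left: "\<And>p. p \<in> I - E \<Longrightarrow> Re (fst p) \<le> 1/2"
    and L: "\<And>p. p \<in> E \<Longrightarrow> norm (fst p) \<le> L"
    and lim: "\<And>s. ((\<lambda>X. \<Prod>p\<in>X. brfactor (fst p) s) \<longlongrightarrow> P s) (finite_subsets_at_top I)"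
    and "K + 2 \<le> \<sigma>" and "4 * (L + 1) \<le> \<sigma>"
    and summable: "(\<lambda>p. reflection_defect \<sigma> (fst p)) summable_on (I - E)"
  shows "norm (P (of_real \<sigma>)) \<le>
    3 ^ card E * exp (\<Sum>\<^sub>\<infinity>p\<in>I - E. reflection_defect \<sigma> (fst p)) * norm (P (of_real (1 - \<sigma>)))"
proof -
  define c where "c = 3 ^ card E * exp (\<Sum>\<^sub>\<infinity>p\<in>I - E. reflection_defect \<sigma> (fst p))"
  have left': "Re (fst p) \<le> 1/2 \<and> 1 - \<sigma> < Re (fst p)" if "p \<in> I - E" for p
    using I[of p] left[OF that] that \<open>K + 2 \<le> \<sigma>\<close> by auto
  have "norm (\<Prod>p\<in>X. brfactor (fst p) (of_real \<sigma>)) \<le> c * norm (\<Prod>p\<in>X. brfactor (fst p) (of_real (1 - \<sigma>)))"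
    if X: "finite X" "X \<subseteq> I" for X
  proof -
    have "norm (\<Prod>p\<in>X. brfactor (fst p) (of_real \<sigma>)) \<le> 3 ^ card E *
        exp (\<Sum>p\<in>X - E. reflection_defect \<sigma> (fst p)) * norm (\<Prod>p\<in>X. brfactor (fst p) (of_real (1 - \<sigma>)))"
    proof (rule norm_prod_brfactor_reflection_le[OF X(1) \<open>finite E\<close> _ _ _ \<open>4 * (L + 1) \<le> \<sigma>\<close>])
      show "fst p \<noteq> 0" if "p \<in> X" for p using I that X(2) by blast
      show "Re (fst p) \<le> 1/2 \<and> 1 - \<sigma> < Re (fst p)" if "p \<in> X - E" for p
        using left' that X(2) by blast
      show "norm (fst p) \<le> L" if "p \<in> X \<inter> E" for p using L that by blast
    qed
    also have "(\<Sum>p\<in>X - E. reflection_defect \<sigma> (fst p)) \<le> (\<Sum>\<^sub>\<infinity>p\<in>I - E. reflection_defect \<sigma> (fst p))"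
      using summable X left' by (intro finite_sum_le_infsum reflection_defect_nonneg) auto
    finally show ?thesis unfolding c_def by (simp add: mult_right_mono)
  qed
  hence "eventually (\<lambda>X. norm (\<Prod>p\<in>X. brfactor (fst p) (of_real \<sigma>)) \<le>
      c * norm (\<Prod>p\<in>X. brfactor (fst p) (of_real (1 - \<sigma>)))) (finite_subsets_at_top I)"
    by (intro eventually_finite_subsets_at_top_weakI)
  moreover have "((\<lambda>X. norm (\<Prod>p\<in>X. brfactor (fst p) (of_real \<sigma>))) \<longlongrightarrow> norm (P (of_real \<sigma>)))
      (finite_subsets_at_top I)"
    by (intro tendsto_norm lim)
  moreover have "((\<lambda>X. c * norm (\<Prod>p\<in>X. brfactor (fst p) (of_real (1 - \<sigma>))))
      \<longlongrightarrow> c * norm (P (of_real (1 - \<sigma>)))) (finite_subsets_at_top I)"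
    by (intro tendsto_intros lim)
  ultimately show ?thesis unfolding c_def by (intro tendsto_le[OF finite_subsets_at_top_neq_bot])
qed

lemma eventually_norm_bracket_limit_reflection_le:
  fixes I :: "(complex \<times> 'a) set"
  assumes summable: "(\<lambda>p. 1 / norm (fst p)^2) summable_on I"
    and I: "\<And>p. p \<in> I \<Longrightarrow> fst p \<noteq> 0 \<and> \<bar>Re (fst p)\<bar> \<le> K"
    and "finite E" and left: "\<And>p. p \<in> I - E \<Longrightarrow> Re (fst p) \<le> 1/2"
    and lim: "\<And>s. ((\<lambda>X. \<Prod>p\<in>X. brfactor (fst p) s) \<longlongrightarrow> P s) (finite_subsets_at_top I)"
    and "0 < \<epsilon>"
  shows "eventually (\<lambda>\<sigma>. norm (P (of_real \<sigma>)) \<le> 3 ^ card E * exp (\<epsilon> * \<sigma>) * norm (P (of_real (1 - \<sigma>)))) at_top"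
proof -
  obtain L where L: "\<And>p. p \<in> E \<Longrightarrow> norm (fst p) \<le> L"
    using finite_imp_bounded[of "fst ` E"] \<open>finite E\<close> unfolding bounded_iff by auto
  have "eventually (\<lambda>\<sigma>. (\<lambda>p. reflection_defect \<sigma> (fst p)) summable_on (I - E) \<and>
      (\<Sum>\<^sub>\<infinity>p\<in>I - E. reflection_defect \<sigma> (fst p)) \<le> \<epsilon> * \<sigma>) at_top"
    using I left \<open>0 < \<epsilon>\<close>
    by (intro eventually_sum_reflection_defect_le summable_on_subset_banach[OF summable]) auto
  thus ?thesis using eventually_ge_at_top[of "K + 2"] eventually_ge_at_top[of "4 * (L + 1)"]
  proof eventually_elim
    case (elim \<sigma>)
    have "norm (P (of_real \<sigma>)) \<le>
        3 ^ card E * exp (\<Sum>\<^sub>\<infinity>p\<in>I - E. reflection_defect \<sigma> (fst p)) * norm (P (of_real (1 - \<sigma>)))"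
      using elim by (intro norm_bracket_limit_reflection_le[OF I \<open>finite E\<close> left L lim]) auto
    also have "\<dots> \<le> 3 ^ card E * exp (\<epsilon> * \<sigma>) * norm (P (of_real (1 - \<sigma>)))"
      using elim by (intro mult_right_mono mult_left_mono) auto
    finally show ?case .
  qed
qed

text \<open>If \<open>B < 0\<close>, the exponential factor makes \<open>\<bar>F(1 - \<sigma>)/F(\<sigma>)\<bar>\<close> grow like \<open>exp(-2B\<sigma>)\<close>,
  while the comparison of \<open>P(\<sigma>)\<close> with \<open>P(1 - \<sigma>)\<close> (taken with \<open>\<epsilon> = -B\<close>) loses at most
  \<open>exp(-B\<sigma>)\<close> of it.\<close>

lemma exponent_nonneg_if_ratio_tendsto_0:
  fixes F P :: "complex \<Rightarrow> complex" and A B :: real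
  assumes rep: "\<And>s. F s = C * s ^ m * exp (of_real B * s) * P s"
    and "0 < A"
    and compare: "\<And>\<epsilon>. \<epsilon> > 0 \<Longrightarrow> eventually (\<lambda>\<sigma>.
          norm (P (of_real \<sigma>)) \<le> A * exp (\<epsilon> * \<sigma>) * norm (P (of_real (1 - \<sigma>)))) at_top"
    and nz: "eventually (\<lambda>\<sigma>. F (of_real \<sigma>) \<noteq> 0) at_top"
    and lim: "((\<lambda>\<sigma>. F (of_real (1 - \<sigma>)) / F (of_real \<sigma>)) \<longlongrightarrow> 0) at_top"
  shows "0 \<le> B"
proof (rule ccontr)
  assume "\<not> 0 \<le> B"
  define c where "c = exp B / (2 ^ m * A)"
  have norm_F: "norm (F (of_real x)) = norm C * \<bar>x\<bar> ^ m * exp (B * x) * norm (P (of_real x))" for x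
    by (simp add: rep norm_mult norm_power norm_exp_eq_Re)
  have "eventually (\<lambda>\<sigma>. norm (P (of_real \<sigma>)) \<le> A * exp (- B * \<sigma>) * norm (P (of_real (1 - \<sigma>)))) at_top"
    using compare[of "- B"] \<open>\<not> 0 \<le> B\<close> by simp
  hence "eventually (\<lambda>\<sigma>. c \<le> norm (F (of_real (1 - \<sigma>)) / F (of_real \<sigma>))) at_top"
    using nz eventually_ge_at_top[of 2]
  proof eventually_elim
    case (elim \<sigma>)
    have "norm (F (of_real \<sigma>)) \<le> norm C * \<sigma> ^ m * exp (B * \<sigma>) * (A * exp (- B * \<sigma>)
        * norm (P (of_real (1 - \<sigma>))))"
      using elim unfolding norm_F abs_of_nonneg[of \<sigma>, OF order_trans[OF zero_le_numeral elim(3)]]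
      by (intro mult_left_mono) auto
    hence "c * norm (F (of_real \<sigma>)) \<le> c * (norm C * \<sigma> ^ m * exp (B * \<sigma>) * (A * exp (- B * \<sigma>)
        * norm (P (of_real (1 - \<sigma>)))))"
      using \<open>0 < A\<close> unfolding c_def by (intro mult_left_mono) auto
    also have "\<dots> = norm C * (\<sigma> / 2) ^ m * exp B * norm (P (of_real (1 - \<sigma>)))"
      using \<open>0 < A\<close> by (simp add: c_def power_divide field_simps flip: exp_add)
    also have "\<dots> \<le> norm C * (\<sigma> - 1) ^ m * (exp B * exp (- B * \<sigma>)) * norm (P (of_real (1 - \<sigma>)))"
      using elim \<open>\<not> 0 \<le> B\<close>
      by (intro mult_right_mono mult_left_mono mult_mono power_mono) (auto simp: mult_le_0_iff)
    also have "\<dots> = norm C * \<bar>1 - \<sigma>\<bar> ^ m * exp (B * (1 - \<sigma>)) * norm (P (of_real (1 - \<sigma>)))"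
      using elim by (simp add: exp_add[symmetric] algebra_simps)
    also have "\<dots> = norm (F (of_real (1 - \<sigma>)))" by (rule norm_F[symmetric])
    finally show ?case using elim by (simp add: norm_divide pos_le_divide_eq)
  qed
  moreover have "eventually (\<lambda>\<sigma>. norm (F (of_real (1 - \<sigma>)) / F (of_real \<sigma>)) < c) at_top"
    using tendsto_norm[OF lim] \<open>0 < A\<close> unfolding c_def by (intro order_tendstoD(2)) auto
  ultimately have "eventually (\<lambda>_::real. False) at_top" by eventually_elim simp
  thus False by simp
qed

theorem lemma5p1:
  fixes F :: "complex \<Rightarrow> complex"
  assumes genus: "genus_le_one F"
    and real_axis: "\<forall>x::real. F (of_real x) \<in> \<real>"
    and strip: "\<exists>\<sigma>0::real. \<sigma>0 < 1/2 \<and>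
                  finite {z. F z = 0 \<and> \<not> (\<sigma>0 < Re z \<and> Re z < 1/2)}"
    and right: "finite {z. F z = 0 \<and> Re z \<ge> 1/2}"
    and count: "\<exists>C>0. eventually (\<lambda>T. real (zero_count F T) \<le> C * T * ln T) at_top"
    and ratio_pos: "eventually (\<lambda>\<sigma>::real. Re (F (of_real (1 - \<sigma>)) / F (of_real \<sigma>)) > 0) at_top"
    and ratio_lim: "((\<lambda>\<sigma>::real. F (of_real (1 - \<sigma>)) / F (of_real \<sigma>)) \<longlongrightarrow> 0) at_top"
  shows "\<exists>(C::complex) (m::nat) (B'::real) (P::complex \<Rightarrow> complex). B' \<ge> 0 \<and>
           (\<forall>s. (\<lambda>p. norm (brfactor (fst p) s - 1)) summable_on prod_index F) \<and>
           (\<forall>K. compact K \<longrightarrow>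
              uniform_limit K (\<lambda>X s. \<Prod>p\<in>X. brfactor (fst p) s) P
                (finite_subsets_at_top (prod_index F))) \<and>
           (\<forall>s. F s = C * s ^ m * exp (of_real B' * s) * P s)"
proof -
  have hol: "F holomorphic_on UNIV" using genus by (simp add: genus_le_one_def)
  have nz: "eventually (\<lambda>\<sigma>. F (of_real \<sigma>) \<noteq> 0) at_top"
    using ratio_pos by eventually_elim auto
  then obtain \<sigma>1 where \<sigma>1: "F (of_real \<sigma>1) \<noteq> 0" by (auto simp: eventually_at_top_linorder)
  have conj: "apfst cnj p \<in> zeros_mult F" if "p \<in> zeros_mult F" for p
    by (rule zeros_mult_apfst_cnj[OF hol entire_real_on_Reals_cnj[OF hol real_axis] \<sigma>1 that])
  obtain \<sigma>0 where finite_outside: "finite {z. F z = 0 \<and> \<not> (\<sigma>0 < Re z \<and> Re z < 1/2)}"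
    using strip by blast
  then obtain K where re_bound: "\<And>z. F z = 0 \<Longrightarrow> \<bar>Re z\<bar> \<le> K"
    by (rule bounded_Re_if_finite_outside_strip) auto
  obtain P a m B where lim: "\<And>s. ((\<lambda>X. \<Prod>p\<in>X. brfactor (fst p) s) \<longlongrightarrow> P s)
      (finite_subsets_at_top (prod_index F))" and rep: "\<And>s. F s = exp a * s ^ m * exp (B * s) * P s"
    using genus_le_one_bracket_factorization[OF genus conj re_bound] by metis
  have summable: "(\<lambda>p. 1 / norm (fst p)^2) summable_on prod_index F"
    using genus by (rule genus_le_one_summable_prod_index)
  have I_bound: "fst p \<noteq> 0 \<and> \<bar>Re (fst p)\<bar> \<le> K" if "p \<in> prod_index F" for p
    using that re_bound by (auto simp: prod_index_def zeros_mult_def)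
  have "Im B = 0"
    using rep real_axis bracket_limit_of_real_in_Reals[OF lim] nz by (rule Im_exponent_eq_0)
  define B' where "B' = Re B"
  have B: "B = of_real B'" using \<open>Im B = 0\<close> by (simp add: B'_def complex_eq_iff)
  have finite_right: "finite {p \<in> prod_index F. 1/2 < Re (fst p)}"
    by (rule finite_subset[OF _ finite_zeros_mult[OF right]]) (auto simp: prod_index_def)
  have left: "Re (fst p) \<le> 1/2" if "p \<in> prod_index F - {p \<in> prod_index F. 1/2 < Re (fst p)}" for p
    using that by auto
  have "0 \<le> B'"
    by (rule exponent_nonneg_if_ratio_tendsto_0[OF rep[unfolded B] _
          eventually_norm_bracket_limit_reflection_le[OF summable I_bound finite_right left lim]
          nz ratio_lim]) simp
  show ?thesis
  proof (intro exI[of _ "exp a"] exI[of _ m] exI[of _ B'] exI[of _ P] conjI allI impI)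
    show "(\<lambda>p. norm (brfactor (fst p) s - 1)) summable_on prod_index F" for s
      using summable I_bound by (rule summable_norm_brfactor_minus_one)
    show "uniform_limit S (\<lambda>X s. \<Prod>p\<in>X. brfactor (fst p) s) P (finite_subsets_at_top (prod_index F))"
      if "compact S" for S
      using summable I_bound lim that by (rule uniform_limit_bracket_product)
  qed (use \<open>0 \<le> B'\<close> rep[unfolded B] in auto)
qed

end
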